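(* Let $\gamma\ge 1$ and let $\{b_n\}_{n\in\mathbb Z}$ be a real sequence with $b_n\ge 0$ for all $n$ and $\{b_n\}\in \ell^{\gamma+1/2}(\mathbb Z)$. Let $\{e_j\}$ be the positive eigenvalues of the operator on $\ell^2(\mathbb Z)$ $$\varphi(n)\mapsto \varphi(n+1)+\varphi(n-1)-2\varphi(n)+b_n\varphi(n),\qquad n\in\mathbb Z.$$ Then $$\sum_j |e_j|^\gamma\le \frac{\pi}{\sqrt3}\,L^{cl}_{\gamma,1}\sum_{n\in\mathbb Z} b_n^{\gamma+1/2},\qquad L^{cl}_{\gamma,1}=\frac{\Gamma(\gamma+1)}{2\sqrt\pi\,\Gamma(\gamma+3/2)}.$$
   Context: The operator is $-D^*D+b_n$ where $D\varphi(n)=\varphi(n+1)-\varphi(n)$ on $\ell^2(\mathbb Z)$ and $D^*\varphi(n)=-(\varphi(n)-\varphi(n-1))$; $b_n$ acts as multiplication. *)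

theory Defs
  imports "HOL-Analysis.Analysis"
begin

definition ell2 :: "(int \<Rightarrow> real) \<Rightarrow> bool" where
  "ell2 \<phi> \<longleftrightarrow> (\<lambda>n. (\<phi> n)\<^sup>2) summable_on UNIV"

definition schr_op :: "(int \<Rightarrow> real) \<Rightarrow> (int \<Rightarrow> real) \<Rightarrow> (int \<Rightarrow> real)" where
  "schr_op b \<phi> = (\<lambda>n. \<phi> (n + 1) + \<phi> (n - 1) - 2 * \<phi> n + b n * \<phi> n)"

definition is_eigenvalue :: "(int \<Rightarrow> real) \<Rightarrow> real \<Rightarrow> bool" where
  "is_eigenvalue b e \<longleftrightarrow> (\<exists>\<phi>. ell2 \<phi> \<and> \<phi> \<noteq> (\<lambda>_. 0) \<and> schr_op b \<phi> = (\<lambda>n. e * \<phi> n))"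

definition L_cl :: "real \<Rightarrow> real" where
  "L_cl \<gamma> = Gamma (\<gamma> + 1) / (2 * sqrt pi * Gamma (\<gamma> + 3/2))"

end

(*
  For orthonormal eigenfunctions
  phi_0, ..., phi_k with density rho = sum_j phi_j^2, summation by parts gives
  e_0 + ... + e_k = sum_n b_n rho(n) - sum_j ||D phi_j||^2, and the kinetic term dominates
  sum_n rho(n)^3 (Eden--Foias: Agmon's inequality |g(n)|^4 <= ||Dg||^2 ||g||^2 applied to
  g = sum_j phi_j(n) phi_j). Hence e_0 + ... + e_k <= sum_n (b_n rho(n) - rho(n)^3), which for
  gamma = 1 gives the claim after maximising b r - r^3 over r >= 0.

  For gamma > 1, Abel summation writes sum_k e_k^gamma as a nonnegative combination of these
  partial sums, and the resulting expression at each site is bounded by lifting in the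
  coupling constant: the gamma = 1 bound for the potential (b - t)_+, integrated against
  gamma (gamma - 1) t^(gamma - 2), yields pi / sqrt 3 * L_cl gamma * b^(gamma + 1/2)
  through a Beta integral.
*)
theory Submission
  imports Defs
begin

lemma has_sum_diff:
  fixes f g :: "'a \<Rightarrow> 'b::topological_ab_group_add"
  assumes "(f has_sum a) A" "(g has_sum b) A"
  shows "((\<lambda>x. f x - g x) has_sum (a - b)) A"
  using has_sum_add[OF assms(1), of "\<lambda>x. - g x" "- b"] assms(2) by (simp add: has_sum_uminus)

lemma has_sum_sum:
  fixes f :: "'i \<Rightarrow> 'a \<Rightarrow> 'b::topological_comm_monoid_add"
  assumes "finite I" "\<And>i. i \<in> I \<Longrightarrow> (f i has_sum s i) A"
  shows "((\<lambda>x. \<Sum>i\<in>I. f i x) has_sum (\<Sum>i\<in>I. s i)) A"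
  using assms by (induction I rule: finite_induct) (simp_all add: has_sum_add)

lemma has_sum_int_shift:
  fixes f :: "int \<Rightarrow> 'a::topological_comm_monoid_add"
  shows "((\<lambda>n. f (n + c)) has_sum s) UNIV \<longleftrightarrow> (f has_sum s) UNIV"
proof -
  have "bij_betw (\<lambda>n. n + c) UNIV UNIV"
    by (rule bij_betwI[where g = "\<lambda>n. n - c"]) auto
  from has_sum_reindex_bij_betw[OF this, of f s] show ?thesis
    by (simp add: o_def)
qed

subsection \<open>The sequence space l^2(Z)\<close>

lemma ell2_shift: "ell2 \<phi> \<Longrightarrow> ell2 (\<lambda>n. \<phi> (n + c))"
  unfolding ell2_def summable_on_def using has_sum_int_shift[of "\<lambda>n. (\<phi> n)\<^sup>2" c] by auto

lemma summable_on_ell2_mult: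
  assumes "ell2 \<phi>" "ell2 \<psi>"
  shows "(\<lambda>n. \<phi> n * \<psi> n) summable_on UNIV"
proof -
  have "(\<lambda>n. (\<phi> n)\<^sup>2 + (\<psi> n)\<^sup>2) summable_on UNIV"
    using assms unfolding ell2_def by (rule summable_on_add)
  moreover have "\<bar>x * y\<bar> \<le> x\<^sup>2 + y\<^sup>2" for x y :: real
  proof -
    have "2 * \<bar>x\<bar> * \<bar>y\<bar> \<le> x\<^sup>2 + y\<^sup>2" using sum_squares_bound[of "\<bar>x\<bar>" "\<bar>y\<bar>"] by simp
    moreover have "0 \<le> \<bar>x\<bar> * \<bar>y\<bar>" by simp
    ultimately show ?thesis unfolding abs_mult by linarith
  qed
  ultimately have "(\<lambda>n. \<bar>\<phi> n * \<psi> n\<bar>) summable_on UNIV"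
    by (rule summable_on_comparison_test) simp_all
  then show ?thesis
    by (subst summable_on_iff_abs_summable_on_real) simp
qed

lemma ell2_lincomb:
  assumes "ell2 f" "ell2 g"
  shows "ell2 (\<lambda>n. a * f n + c * g n)"
proof -
  have "(\<lambda>n. a\<^sup>2 * (f n)\<^sup>2 + (2 * a * c) * (f n * g n) + c\<^sup>2 * (g n)\<^sup>2) summable_on UNIV"
    using assms summable_on_ell2_mult[OF assms] unfolding ell2_def
    by (intro summable_on_add summable_on_cmult_right)
  then show ?thesis
    unfolding ell2_def by (simp add: power2_eq_square algebra_simps)
qed

lemma ell2_sum:
  assumes "finite J" "\<And>j. j \<in> J \<Longrightarrow> ell2 (f j)"
  shows "ell2 (\<lambda>n. \<Sum>j\<in>J. a j * f j n)"
  using assms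
proof (induction J rule: finite_induct)
  case empty
  then show ?case by (simp add: ell2_def)
next
  case (insert i J)
  then have "ell2 (\<lambda>n. a i * f i n + 1 * (\<Sum>j\<in>J. a j * f j n))"
    by (intro ell2_lincomb) auto
  with insert show ?case by simp
qed

definition inner_l2 :: "(int \<Rightarrow> real) \<Rightarrow> (int \<Rightarrow> real) \<Rightarrow> real" where
  "inner_l2 f g = (\<Sum>\<^sub>\<infinity>n. f n * g n)"

definition fwd_diff :: "(int \<Rightarrow> real) \<Rightarrow> int \<Rightarrow> real" where
  "fwd_diff \<phi> n = \<phi> (n + 1) - \<phi> n"

definition discrete_laplacian :: "(int \<Rightarrow> real) \<Rightarrow> int \<Rightarrow> real" where
  "discrete_laplacian \<phi> n = \<phi> (n + 1) + \<phi> (n - 1) - 2 * \<phi> n"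

lemma ell2_fwd_diff: "ell2 f \<Longrightarrow> ell2 (fwd_diff f)"
  using ell2_lincomb[OF ell2_shift[of f 1], of f 1 "-1"] unfolding fwd_diff_def by simp

lemma fwd_diff_sum: "fwd_diff (\<lambda>n. \<Sum>j\<in>J. a j * f j n) = (\<lambda>n. \<Sum>j\<in>J. a j * fwd_diff (f j) n)"
  by (auto simp: fwd_diff_def sum_subtractf[symmetric] algebra_simps)

lemma inner_l2_has_sum: "ell2 f \<Longrightarrow> ell2 g \<Longrightarrow> ((\<lambda>n. f n * g n) has_sum inner_l2 f g) UNIV"
  unfolding inner_l2_def using summable_on_ell2_mult has_sum_infsum by blast

lemma inner_l2_commute: "inner_l2 f g = inner_l2 g f"
  unfolding inner_l2_def by (simp add: mult.commute)

lemma inner_l2_self_nonneg: "inner_l2 f f \<ge> 0"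
  unfolding inner_l2_def by (rule infsum_nonneg) simp

lemma square_le_inner_l2_self:
  assumes "ell2 f"
  shows "(f n)\<^sup>2 \<le> inner_l2 f f"
proof -
  have "(\<Sum>m\<in>{n}. f m * f m) \<le> inner_l2 f f"
    unfolding inner_l2_def
    by (rule finite_sum_le_infsum) (use summable_on_ell2_mult[OF assms assms] in auto)
  then show ?thesis by (simp add: power2_eq_square)
qed

lemma inner_l2_self_pos:
  assumes "ell2 f" "f \<noteq> (\<lambda>_. 0)"
  shows "inner_l2 f f > 0"
proof -
  obtain n where "f n \<noteq> 0" using assms(2) by auto
  then have "0 < (f n)\<^sup>2" by simp
  also have "\<dots> \<le> inner_l2 f f" by (rule square_le_inner_l2_self[OF assms(1)])
  finally show ?thesis .
qed

lemma inner_l2_scale: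
  assumes "ell2 f" "ell2 g"
  shows "inner_l2 (\<lambda>n. a * f n) (\<lambda>n. c * g n) = a * c * inner_l2 f g"
proof -
  have "(\<lambda>n. a * f n * (c * g n)) = (\<lambda>n. (a * c) * (f n * g n))"
    by (auto simp: algebra_simps)
  then show ?thesis
    unfolding inner_l2_def by (simp add: infsum_cmult_right summable_on_ell2_mult[OF assms])
qed

lemma inner_l2_sum:
  assumes "finite J" "finite K" "\<And>j. j \<in> J \<Longrightarrow> ell2 (f j)" "\<And>k. k \<in> K \<Longrightarrow> ell2 (g k)"
  shows "inner_l2 (\<lambda>n. \<Sum>j\<in>J. a j * f j n) (\<lambda>n. \<Sum>k\<in>K. c k * g k n)
    = (\<Sum>j\<in>J. \<Sum>k\<in>K. a j * c k * inner_l2 (f j) (g k))"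
proof -
  have "((\<lambda>n. \<Sum>j\<in>J. \<Sum>k\<in>K. a j * c k * (f j n * g k n))
      has_sum (\<Sum>j\<in>J. \<Sum>k\<in>K. a j * c k * inner_l2 (f j) (g k))) UNIV"
    using assms by (intro has_sum_sum has_sum_cmult_right inner_l2_has_sum) auto
  moreover have "(\<lambda>n. (\<Sum>j\<in>J. a j * f j n) * (\<Sum>k\<in>K. c k * g k n))
      = (\<lambda>n. \<Sum>j\<in>J. \<Sum>k\<in>K. a j * c k * (f j n * g k n))"
    by (auto simp: sum_product algebra_simps)
  ultimately show ?thesis
    unfolding inner_l2_def by (simp add: infsumI)
qed

lemma summation_by_parts:
  assumes f: "ell2 \<phi>" and g: "ell2 \<psi>"
  shows "((\<lambda>n. \<phi> n * discrete_laplacian \<psi> n) has_sum - inner_l2 (fwd_diff \<phi>) (fwd_diff \<psi>)) UNIV"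
proof -
  define P where "P = inner_l2 \<phi> \<psi>"
  define A where "A = inner_l2 \<phi> (\<lambda>n. \<psi> (n + 1))"
  define C where "C = inner_l2 (\<lambda>n. \<phi> (n + 1)) \<psi>"
  have hP: "((\<lambda>n. \<phi> n * \<psi> n) has_sum P) UNIV"
    unfolding P_def by (rule inner_l2_has_sum[OF f g])
  have hP1: "((\<lambda>n. \<phi> (n + 1) * \<psi> (n + 1)) has_sum P) UNIV"
    using has_sum_int_shift[of "\<lambda>n. \<phi> n * \<psi> n" 1 P] hP by simp
  have hA: "((\<lambda>n. \<phi> n * \<psi> (n + 1)) has_sum A) UNIV"
    unfolding A_def by (rule inner_l2_has_sum[OF f ell2_shift[OF g]])
  have hC: "((\<lambda>n. \<phi> (n + 1) * \<psi> n) has_sum C) UNIV"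
    unfolding C_def by (rule inner_l2_has_sum[OF ell2_shift[OF f] g])
  have hC': "((\<lambda>n. \<phi> n * \<psi> (n - 1)) has_sum C) UNIV"
    using has_sum_int_shift[of "\<lambda>n. \<phi> n * \<psi> (n - 1)" 1 C] hC by simp
  have "((\<lambda>n. \<phi> (n + 1) * \<psi> (n + 1) - \<phi> (n + 1) * \<psi> n - \<phi> n * \<psi> (n + 1) + \<phi> n * \<psi> n)
      has_sum (P - C - A + P)) UNIV"
    by (intro has_sum_add has_sum_diff hP hP1 hA hC)
  moreover have "((\<lambda>n. fwd_diff \<phi> n * fwd_diff \<psi> n) has_sum inner_l2 (fwd_diff \<phi>) (fwd_diff \<psi>)) UNIV"
    by (rule inner_l2_has_sum[OF ell2_fwd_diff[OF f] ell2_fwd_diff[OF g]])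
  moreover have "(\<lambda>n. \<phi> (n + 1) * \<psi> (n + 1) - \<phi> (n + 1) * \<psi> n - \<phi> n * \<psi> (n + 1) + \<phi> n * \<psi> n)
      = (\<lambda>n. fwd_diff \<phi> n * fwd_diff \<psi> n)"
    by (auto simp: fwd_diff_def algebra_simps)
  ultimately have "inner_l2 (fwd_diff \<phi>) (fwd_diff \<psi>) = P - C - A + P"
    using has_sum_unique by metis
  moreover have "((\<lambda>n. \<phi> n * \<psi> (n + 1) + \<phi> n * \<psi> (n - 1) - 2 * (\<phi> n * \<psi> n)) has_sum (A + C - 2 * P)) UNIV"
    by (intro has_sum_add has_sum_diff hA hC' has_sum_cmult_right hP)
  moreover have "(\<lambda>n. \<phi> n * \<psi> (n + 1) + \<phi> n * \<psi> (n - 1) - 2 * (\<phi> n * \<psi> n))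
      = (\<lambda>n. \<phi> n * discrete_laplacian \<psi> n)"
    by (auto simp: discrete_laplacian_def algebra_simps)
  ultimately show ?thesis by simp
qed

subsection \<open>Eigenfunctions\<close>

definition is_eigenfunction :: "(int \<Rightarrow> real) \<Rightarrow> real \<Rightarrow> (int \<Rightarrow> real) \<Rightarrow> bool" where
  "is_eigenfunction b e \<phi> \<longleftrightarrow> ell2 \<phi> \<and> schr_op b \<phi> = (\<lambda>n. e * \<phi> n)"

lemma schr_op_apply: "schr_op b \<phi> n = discrete_laplacian \<phi> n + b n * \<phi> n"
  unfolding schr_op_def discrete_laplacian_def by simp

lemma is_eigenfunction_laplacian:
  "is_eigenfunction b e \<psi> \<Longrightarrow> discrete_laplacian \<psi> n = e * \<psi> n - b n * \<psi> n"
  unfolding is_eigenfunction_def by (metis schr_op_apply add_diff_cancel_right')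

lemma eigenfunction_potential_has_sum:
  assumes \<phi>: "ell2 \<phi>" and \<psi>: "is_eigenfunction b e \<psi>"
  shows "((\<lambda>n. b n * \<phi> n * \<psi> n) has_sum (e * inner_l2 \<phi> \<psi> + inner_l2 (fwd_diff \<phi>) (fwd_diff \<psi>))) UNIV"
proof -
  have "ell2 \<psi>" using \<psi> unfolding is_eigenfunction_def by blast
  then have "((\<lambda>n. e * (\<phi> n * \<psi> n) - \<phi> n * discrete_laplacian \<psi> n)
      has_sum (e * inner_l2 \<phi> \<psi> - - inner_l2 (fwd_diff \<phi>) (fwd_diff \<psi>))) UNIV"
    by (intro has_sum_diff has_sum_cmult_right inner_l2_has_sum summation_by_parts \<phi>)
  moreover have "e * (\<phi> n * \<psi> n) - \<phi> n * discrete_laplacian \<psi> n = b n * \<phi> n * \<psi> n" for n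
    unfolding is_eigenfunction_laplacian[OF \<psi>] by (simp add: algebra_simps)
  ultimately show ?thesis by simp
qed

lemma eigenfunctions_orthogonal:
  assumes \<phi>: "is_eigenfunction b e \<phi>" and \<psi>: "is_eigenfunction b e' \<psi>" and "e \<noteq> e'"
  shows "inner_l2 \<phi> \<psi> = 0"
proof -
  have "ell2 \<phi>" "ell2 \<psi>" using \<phi> \<psi> unfolding is_eigenfunction_def by blast+
  have "((\<lambda>n. b n * \<phi> n * \<psi> n) has_sum (e' * inner_l2 \<phi> \<psi> + inner_l2 (fwd_diff \<phi>) (fwd_diff \<psi>))) UNIV"
    by (rule eigenfunction_potential_has_sum[OF \<open>ell2 \<phi>\<close> \<psi>])
  moreover have "((\<lambda>n. b n * \<psi> n * \<phi> n) has_sum (e * inner_l2 \<psi> \<phi> + inner_l2 (fwd_diff \<psi>) (fwd_diff \<phi>))) UNIV"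
    by (rule eigenfunction_potential_has_sum[OF \<open>ell2 \<psi>\<close> \<phi>])
  moreover have "(\<lambda>n. b n * \<psi> n * \<phi> n) = (\<lambda>n. b n * \<phi> n * \<psi> n)"
    by (auto simp: algebra_simps)
  ultimately have "e' * inner_l2 \<phi> \<psi> = e * inner_l2 \<phi> \<psi>"
    using has_sum_unique by (fastforce simp: inner_l2_commute[of \<psi>] inner_l2_commute[of "fwd_diff \<psi>"])
  then have "(e' - e) * inner_l2 \<phi> \<psi> = 0" by (simp add: algebra_simps)
  with \<open>e \<noteq> e'\<close> show ?thesis by simp
qed

lemma is_eigenvalue_normalized:
  assumes "is_eigenvalue b e"
  shows "\<exists>\<phi>. is_eigenfunction b e \<phi> \<and> inner_l2 \<phi> \<phi> = 1"
proof -
  obtain \<phi> where \<phi>: "ell2 \<phi>" "\<phi> \<noteq> (\<lambda>_. 0)" "schr_op b \<phi> = (\<lambda>n. e * \<phi> n)"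
    using assms unfolding is_eigenvalue_def by blast
  define a where "a = 1 / sqrt (inner_l2 \<phi> \<phi>)"
  have pos: "inner_l2 \<phi> \<phi> > 0" by (rule inner_l2_self_pos[OF \<phi>(1,2)])
  have "ell2 (\<lambda>n. a * \<phi> n)" using ell2_lincomb[OF \<phi>(1) \<phi>(1), of a 0] by simp
  moreover have "schr_op b (\<lambda>n. a * \<phi> n) = (\<lambda>n. a * schr_op b \<phi> n)"
    by (auto simp: schr_op_def algebra_simps)
  then have "schr_op b (\<lambda>n. a * \<phi> n) = (\<lambda>n. e * (a * \<phi> n))"
    by (simp add: \<phi>(3) algebra_simps)
  moreover have "inner_l2 (\<lambda>n. a * \<phi> n) (\<lambda>n. a * \<phi> n) = 1"
    using inner_l2_scale[OF \<phi>(1) \<phi>(1), of a a] pos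
    by (simp add: a_def power2_eq_square[symmetric] power_divide)
  ultimately show ?thesis unfolding is_eigenfunction_def by blast
qed

subsection \<open>Agmon's inequality and the Eden--Foias bound\<close>

lemma sign_weighted_square_diff_le:
  fixes a c l s :: real
  assumes "l > 0" "s = 1 \<or> s = -1"
  shows "s * (a\<^sup>2 - c\<^sup>2) \<le> l / 2 * (c - a)\<^sup>2 + (a\<^sup>2 + c\<^sup>2) / l"
proof -
  have "l * (l / 2 * (c - a)\<^sup>2 + (a\<^sup>2 + c\<^sup>2) / l) - l * (s * (a\<^sup>2 - c\<^sup>2))
      = (l * (c - a) + s * (a + c))\<^sup>2 / 2 + (a - c)\<^sup>2 / 2"
    using assms by (auto simp: field_simps power2_eq_square)
  moreover have "0 \<le> (l * (c - a) + s * (a + c))\<^sup>2 / 2 + (a - c)\<^sup>2 / 2" by simp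
  ultimately have "l * (s * (a\<^sup>2 - c\<^sup>2)) \<le> l * (l / 2 * (c - a)\<^sup>2 + (a\<^sup>2 + c\<^sup>2) / l)"
    by linarith
  then show ?thesis using assms(1) by simp
qed

lemma square_le_of_AM_GM_family:
  fixes x A G :: real
  assumes "0 \<le> x" "x \<le> G" "0 \<le> A" "\<And>l. l > 0 \<Longrightarrow> 2 * x \<le> l / 2 * A + 2 * G / l"
  shows "x\<^sup>2 \<le> A * G"
proof (cases "x = 0")
  case True
  then show ?thesis using assms by simp
next
  case False
  then have "x > 0" "G > 0" using assms(1,2) by auto
  from assms(4)[of "2 * G / x"] this have "2 * x \<le> G / x * A + x" by simp
  with \<open>x > 0\<close> show ?thesis by (simp add: field_simps power2_eq_square)
qed

text \<open>Telescoping with the sign change at n turns 2 g(n)^2 into a sum of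
  differences of squares, each bounded pointwise; optimising over l gives the result.\<close>
lemma agmon_inequality:
  assumes g: "ell2 g"
  shows "((g n)\<^sup>2)\<^sup>2 \<le> inner_l2 (fwd_diff g) (fwd_diff g) * inner_l2 g g"
proof (rule square_le_of_AM_GM_family)
  show "0 \<le> (g n)\<^sup>2" by simp
  show "(g n)\<^sup>2 \<le> inner_l2 g g" by (rule square_le_inner_l2_self[OF g])
  show "0 \<le> inner_l2 (fwd_diff g) (fwd_diff g)" by (rule inner_l2_self_nonneg)
  fix l :: real
  assume l: "l > 0"
  define s where "s m = (if m \<ge> n then 1 else - 1 :: real)" for m
  define u where "u m = s m * (g m)\<^sup>2" for m
  have "(\<lambda>m. \<bar>u m\<bar>) summable_on UNIV"
    by (rule summable_on_comparison_test[OF g[unfolded ell2_def]]) (auto simp: u_def s_def abs_mult)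
  then have "u summable_on UNIV"
    by (subst summable_on_iff_abs_summable_on_real) simp
  then obtain U where hU: "(u has_sum U) UNIV"
    unfolding summable_on_def by blast
  moreover have "((\<lambda>m. u (m + 1)) has_sum U) UNIV"
    using has_sum_int_shift[of u 1 U] hU by simp
  moreover have "((\<lambda>m. if m = n - 1 then 2 * (g n)\<^sup>2 else 0) has_sum (2 * (g n)\<^sup>2)) UNIV"
    by (rule has_sum_finite_neutralI[where B = "{n - 1}"]) auto
  ultimately have "((\<lambda>m. u m - u (m + 1) + (if m = n - 1 then 2 * (g n)\<^sup>2 else 0))
      has_sum (U - U + 2 * (g n)\<^sup>2)) UNIV"
    by (intro has_sum_add has_sum_diff)
  moreover have "u m - u (m + 1) + (if m = n - 1 then 2 * (g n)\<^sup>2 else 0) = s m * ((g m)\<^sup>2 - (g (m + 1))\<^sup>2)" for m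
    by (auto simp: u_def s_def algebra_simps)
  ultimately have lhs: "((\<lambda>m. s m * ((g m)\<^sup>2 - (g (m + 1))\<^sup>2)) has_sum 2 * (g n)\<^sup>2) UNIV"
    by simp
  have gg: "((\<lambda>m. g m * g m) has_sum inner_l2 g g) UNIV"
    by (rule inner_l2_has_sum[OF g g])
  then have "((\<lambda>m. g (m + 1) * g (m + 1)) has_sum inner_l2 g g) UNIV"
    using has_sum_int_shift[of "\<lambda>m. g m * g m" 1] by simp
  then have rhs: "((\<lambda>m. l / 2 * (fwd_diff g m * fwd_diff g m) + (g m * g m + g (m + 1) * g (m + 1)) / l)
      has_sum (l / 2 * inner_l2 (fwd_diff g) (fwd_diff g) + (inner_l2 g g + inner_l2 g g) / l)) UNIV"
    by (intro has_sum_add has_sum_cmult_right inner_l2_has_sum ell2_fwd_diff g has_sum_divide_const gg)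
  have "2 * (g n)\<^sup>2 \<le> l / 2 * inner_l2 (fwd_diff g) (fwd_diff g) + (inner_l2 g g + inner_l2 g g) / l"
  proof (rule has_sum_mono[OF lhs rhs])
    fix m
    have "s m = 1 \<or> s m = -1" by (simp add: s_def)
    from sign_weighted_square_diff_le[OF l this, of "g m" "g (m + 1)"]
    show "s m * ((g m)\<^sup>2 - (g (m + 1))\<^sup>2)
        \<le> l / 2 * (fwd_diff g m * fwd_diff g m) + (g m * g m + g (m + 1) * g (m + 1)) / l"
      by (simp add: fwd_diff_def power2_eq_square)
  qed
  then show "2 * (g n)\<^sup>2 \<le> l / 2 * inner_l2 (fwd_diff g) (fwd_diff g) + 2 * inner_l2 g g / l"
    by simp
qed

text \<open>Agmon's inequality for g = (\<Sum>j. \<phi>_j(n) \<phi>_j), for which g(n) = \<parallel>g\<parallel>^2 = \<rho>(n).\<close>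
lemma orthonormal_density_cube_le:
  fixes \<phi> :: "'j \<Rightarrow> int \<Rightarrow> real"
  assumes J: "finite J" and ell: "\<And>j. j \<in> J \<Longrightarrow> ell2 (\<phi> j)"
    and on: "\<And>i j. i \<in> J \<Longrightarrow> j \<in> J \<Longrightarrow> inner_l2 (\<phi> i) (\<phi> j) = (if i = j then 1 else 0)"
  shows "(\<Sum>j\<in>J. (\<phi> j n)\<^sup>2) ^ 3
    \<le> (\<Sum>i\<in>J. \<Sum>j\<in>J. \<phi> i n * \<phi> j n * inner_l2 (fwd_diff (\<phi> i)) (fwd_diff (\<phi> j)))"
    (is "?\<rho> ^ 3 \<le> ?Q")
proof -
  define g where "g = (\<lambda>m. \<Sum>j\<in>J. \<phi> j n * \<phi> j m)"
  have "ell2 g" unfolding g_def by (rule ell2_sum[OF J ell])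
  have gn: "g n = ?\<rho>" unfolding g_def by (simp add: power2_eq_square)
  have gg: "inner_l2 g g = ?\<rho>"
  proof -
    have "inner_l2 g g = (\<Sum>i\<in>J. \<Sum>j\<in>J. \<phi> i n * \<phi> j n * inner_l2 (\<phi> i) (\<phi> j))"
      unfolding g_def by (rule inner_l2_sum[OF J J ell ell])
    also have "\<dots> = (\<Sum>i\<in>J. \<Sum>j\<in>J. if i = j then \<phi> i n * \<phi> j n else 0)"
      by (intro sum.cong refl) (simp add: on)
    also have "\<dots> = ?\<rho>" using J by (simp add: power2_eq_square)
    finally show ?thesis .
  qed
  have dg: "inner_l2 (fwd_diff g) (fwd_diff g) = ?Q"
    unfolding g_def fwd_diff_sum by (rule inner_l2_sum[OF J J ell2_fwd_diff[OF ell] ell2_fwd_diff[OF ell]])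
  have cube_le: "r ^ 3 \<le> q" if "0 \<le> r" "0 \<le> q" "(r\<^sup>2)\<^sup>2 \<le> q * r" for r q :: real
  proof (cases "r = 0")
    case False
    with that have "0 < r" "r * r ^ 3 \<le> r * q"
      by (simp_all add: power2_eq_square power3_eq_cube mult.commute mult.left_commute)
    then show ?thesis by simp
  qed (use that in simp)
  show ?thesis
  proof (rule cube_le)
    show "0 \<le> ?\<rho>" by (simp add: sum_nonneg)
    show "0 \<le> ?Q" using inner_l2_self_nonneg[of "fwd_diff g"] unfolding dg .
    show "(?\<rho>\<^sup>2)\<^sup>2 \<le> ?Q * ?\<rho>"
      using agmon_inequality[OF \<open>ell2 g\<close>, of n] unfolding gn gg dg .
  qed
qed

lemma orthonormal_density_cube_bound:
  fixes \<phi> :: "'j \<Rightarrow> int \<Rightarrow> real"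
  assumes J: "finite J" and ell: "\<And>j. j \<in> J \<Longrightarrow> ell2 (\<phi> j)"
    and on: "\<And>i j. i \<in> J \<Longrightarrow> j \<in> J \<Longrightarrow> inner_l2 (\<phi> i) (\<phi> j) = (if i = j then 1 else 0)"
  defines "\<rho> \<equiv> \<lambda>n. \<Sum>j\<in>J. (\<phi> j n)\<^sup>2"
  shows "(\<lambda>n. \<rho> n ^ 3) summable_on UNIV
    \<and> (\<Sum>\<^sub>\<infinity>n. \<rho> n ^ 3) \<le> (\<Sum>j\<in>J. inner_l2 (fwd_diff (\<phi> j)) (fwd_diff (\<phi> j)))"
proof -
  define K where "K i j = inner_l2 (fwd_diff (\<phi> i)) (fwd_diff (\<phi> j))" for i j
  define Q where "Q n = (\<Sum>i\<in>J. \<Sum>j\<in>J. \<phi> i n * \<phi> j n * K i j)" for n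
  have le: "\<rho> n ^ 3 \<le> Q n" for n
    unfolding \<rho>_def Q_def K_def by (rule orthonormal_density_cube_le[OF J ell on])
  have nonneg: "0 \<le> \<rho> n" for n
    unfolding \<rho>_def by (simp add: sum_nonneg)
  have "((\<lambda>n. \<Sum>i\<in>J. \<Sum>j\<in>J. K i j * (\<phi> i n * \<phi> j n))
      has_sum (\<Sum>i\<in>J. \<Sum>j\<in>J. K i j * inner_l2 (\<phi> i) (\<phi> j))) UNIV"
    using J ell by (intro has_sum_sum has_sum_cmult_right inner_l2_has_sum) auto
  moreover have "(\<lambda>n. \<Sum>i\<in>J. \<Sum>j\<in>J. K i j * (\<phi> i n * \<phi> j n)) = Q"
    by (auto simp: Q_def algebra_simps)
  ultimately have "(Q has_sum (\<Sum>i\<in>J. \<Sum>j\<in>J. K i j * inner_l2 (\<phi> i) (\<phi> j))) UNIV"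
    by simp
  moreover have "(\<Sum>i\<in>J. \<Sum>j\<in>J. K i j * inner_l2 (\<phi> i) (\<phi> j)) = (\<Sum>j\<in>J. K j j)"
  proof -
    have "(\<Sum>i\<in>J. \<Sum>j\<in>J. K i j * inner_l2 (\<phi> i) (\<phi> j)) = (\<Sum>i\<in>J. \<Sum>j\<in>J. if i = j then K i j else 0)"
      by (intro sum.cong refl) (simp add: on)
    then show ?thesis using J by simp
  qed
  ultimately have hQ: "(Q has_sum (\<Sum>j\<in>J. K j j)) UNIV" by simp
  have "(\<lambda>n. \<rho> n ^ 3) summable_on UNIV"
    by (rule summable_on_comparison_test[OF has_sum_imp_summable[OF hQ]])
      (simp_all add: le nonneg)
  moreover from this have "(\<Sum>\<^sub>\<infinity>n. \<rho> n ^ 3) \<le> (\<Sum>j\<in>J. K j j)"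
    by (rule has_sum_mono[OF has_sum_infsum hQ le])
  ultimately show ?thesis unfolding K_def by simp
qed

subsection \<open>The lifting argument in the coupling constant\<close>

text \<open>The maximum of a r - r^3 over r \<ge> 0 is attained at r = sqrt (a/3).\<close>
definition cubic_max_const :: real where
  "cubic_max_const = 2 / (3 * sqrt 3)"

lemma cubic_max_const_pos: "cubic_max_const > 0"
  by (simp add: cubic_max_const_def)

lemma cubic_bound:
  fixes a r :: real
  assumes "r \<ge> 0"
  shows "a * r - r ^ 3 \<le> cubic_max_const * max a 0 powr (3/2)"
proof (cases "a \<le> 0")
  case True
  then have "a * r \<le> 0" using assms by (simp add: mult_nonpos_nonneg)
  moreover have "0 \<le> r ^ 3" using assms by simp
  moreover have "0 \<le> cubic_max_const * max a 0 powr (3/2)" using cubic_max_const_pos by simp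
  ultimately show ?thesis by linarith
next
  case False
  define s where "s = sqrt (a / 3)"
  have "s > 0" "a = 3 * s\<^sup>2" using False by (simp_all add: s_def)
  have "max a 0 powr (3/2) = a powr (1 + 1/2)"
    using False by (simp add: max_def)
  also have "\<dots> = a powr 1 * a powr (1/2)" by (rule powr_add)
  also have "\<dots> = a * (sqrt 3 * s)"
    using False by (simp add: powr_half_sqrt s_def real_sqrt_divide)
  finally have "cubic_max_const * max a 0 powr (3/2) = 2 * s ^ 3"
    using \<open>a = 3 * s\<^sup>2\<close> by (simp add: cubic_max_const_def power2_eq_square power3_eq_cube field_simps)
  moreover have "2 * s ^ 3 - (a * r - r ^ 3) = (r - s)\<^sup>2 * (r + 2 * s)"
    unfolding \<open>a = 3 * s\<^sup>2\<close> by (simp add: power2_eq_square power3_eq_cube algebra_simps)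
  moreover have "0 \<le> (r - s)\<^sup>2 * (r + 2 * s)" using \<open>s > 0\<close> assms by simp
  ultimately show ?thesis by linarith
qed

lemma Gamma_plus1_pos: "(z::real) > 0 \<Longrightarrow> Gamma (z + 1) = z * Gamma z"
  by (rule Gamma_plus1) (auto dest: nonpos_Ints_nonpos)

lemma Gamma_five_halves: "Gamma (5/2 :: real) = 3/4 * sqrt pi"
proof -
  have "Gamma (5/2 :: real) = 3/2 * (1/2 * Gamma (1/2))"
    using Gamma_plus1_pos[of "3/2"] Gamma_plus1_pos[of "1/2"] by simp
  then show ?thesis by (simp add: Gamma_one_half_real)
qed

lemma L_cl_nonneg: "g \<ge> 1 \<Longrightarrow> L_cl g \<ge> 0"
  unfolding L_cl_def by (simp add: Gamma_real_pos less_imp_le)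

lemma L_cl_one: "pi / sqrt 3 * L_cl 1 = cubic_max_const"
proof -
  have "Gamma (2::real) = 1" using Gamma_fact[of 1] by simp
  then have "L_cl 1 = 1 / (2 * sqrt pi * (3/4 * sqrt pi))"
    unfolding L_cl_def by (simp add: Gamma_five_halves)
  also have "\<dots> = 2 / (3 * pi)" by (simp add: field_simps)
  finally show ?thesis unfolding cubic_max_const_def by (simp add: field_simps)
qed

lemma L_cl_eq_Beta:
  assumes g: "g > 1"
  shows "pi / sqrt 3 * L_cl g = g * (g - 1) * cubic_max_const * Beta (g - 1) (5/2)"
proof -
  define A where "A = g * ((g - 1) * Gamma (g - 1)) / Gamma (g + 3/2)"
  have "Gamma (g + 1) = g * ((g - 1) * Gamma (g - 1))"
    using g Gamma_plus1_pos[of g] Gamma_plus1_pos[of "g - 1"] by simp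
  then have "pi / sqrt 3 * L_cl g = A * (pi / sqrt pi) / (2 * sqrt 3)"
    unfolding L_cl_def A_def by (simp add: divide_simps mult_ac)
  also have "pi / sqrt pi = sqrt pi" by (simp add: real_div_sqrt)
  also have "Gamma (g - 1 + 5/2) = Gamma (g + 3/2)" by (simp add: add.commute)
  then have "A * sqrt pi / (2 * sqrt 3) = g * (g - 1) * cubic_max_const * Beta (g - 1) (5/2)"
    unfolding cubic_max_const_def Beta_def Gamma_five_halves A_def by (simp add: divide_simps mult_ac)
  finally show ?thesis .
qed

definition lifting_weight :: "real \<Rightarrow> real \<Rightarrow> real \<Rightarrow> real" where
  "lifting_weight g b t = g * (g - 1) * t powr (g - 2) * (cubic_max_const * max (b - t) 0 powr (3/2))"

lemma lifting_weight_nonneg: "t \<ge> 0 \<Longrightarrow> g \<ge> 1 \<Longrightarrow> lifting_weight g b t \<ge> 0"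
  unfolding lifting_weight_def using cubic_max_const_pos by (intro mult_nonneg_nonneg) auto

lemma lifting_weight_has_integral_Beta:
  assumes g: "g > 1" and b: "b > 0"
  shows "(lifting_weight g b has_integral
      (g * (g - 1) * cubic_max_const * Beta (g - 1) (5/2) * b powr (g + 1/2))) {0..b}"
proof -
  have "((\<lambda>s. s powr (g - 1 - 1) * (1 - s) powr (5/2 - 1)) has_integral Beta (g - 1) (5/2)) (cbox 0 1)"
    using has_integral_Beta_real[of "g - 1" "5/2"] g by (simp add: cbox_interval)
  from has_integral_affinity'[OF this, of "1/b" 0]
  have B: "((\<lambda>t. (t / b) powr (g - 2) * (1 - t / b) powr (3/2)) has_integral (b * Beta (g - 1) (5/2))) {0..b}"
    using b by (simp add: cbox_interval field_simps)
  define K where "K = g * (g - 1) * cubic_max_const * b powr (g - 2) * b powr (3/2)"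
  have BK: "((\<lambda>t. K * ((t / b) powr (g - 2) * (1 - t / b) powr (3/2))) has_integral (K * (b * Beta (g - 1) (5/2)))) {0..b}"
    by (rule has_integral_mult_right[OF B])
  have eq: "K * ((t / b) powr (g - 2) * (1 - t / b) powr (3/2)) = lifting_weight g b t"
    if "t \<in> {0..b}" for t
  proof -
    have "1 - t / b = (b - t) / b" using b by (simp add: field_simps)
    then have e1: "(1 - t / b) powr (3/2) = (b - t) powr (3/2) / b powr (3/2)" by (simp add: powr_divide)
    have e2: "(t / b) powr (g - 2) = t powr (g - 2) / b powr (g - 2)" by (simp add: powr_divide)
    have e3: "max (b - t) 0 = b - t" using that by simp
    have "b powr (g - 2) > 0" "b powr (3/2) > 0" using b by auto
    then show ?thesis unfolding K_def lifting_weight_def e1 e2 e3 by (simp add: field_simps)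
  qed
  have val: "K * (b * Beta (g - 1) (5/2))
      = g * (g - 1) * cubic_max_const * Beta (g - 1) (5/2) * b powr (g + 1/2)"
  proof -
    have "b powr (g - 2) * b powr (3/2) * b powr 1 = b powr (g - 2 + 3/2 + 1)" by (simp only: powr_add)
    then have "b powr (g - 2) * b powr (3/2) * b = b powr (g + 1/2)" using b by (simp add: add.commute)
    moreover have "K * (b * Beta (g - 1) (5/2))
        = g * (g - 1) * cubic_max_const * Beta (g - 1) (5/2) * (b powr (g - 2) * b powr (3/2) * b)"
      unfolding K_def by (simp only: mult_ac)
    ultimately show ?thesis by simp
  qed
  show ?thesis using has_integral_eq[OF eq BK] unfolding val .
qed

lemma lifting_weight_has_integral:
  assumes g: "g > 1" and b: "b \<ge> 0" and M: "M \<ge> b"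
  shows "(lifting_weight g b has_integral (pi / sqrt 3 * L_cl g * b powr (g + 1/2))) {0..M}"
proof -
  have "(lifting_weight g b has_integral (pi / sqrt 3 * L_cl g * b powr (g + 1/2))) {0..b}"
  proof (cases "b = 0")
    case False
    with lifting_weight_has_integral_Beta[OF g] b show ?thesis unfolding L_cl_eq_Beta[OF g] by simp
  qed (simp add: has_integral_refl)
  moreover have "(lifting_weight g b has_integral 0) {b..M}"
    by (rule has_integral_eq[OF _ has_integral_0]) (simp add: lifting_weight_def)
  ultimately have "(lifting_weight g b has_integral (pi / sqrt 3 * L_cl g * b powr (g + 1/2) + 0)) {0..M}"
    by (rule has_integral_combine[OF b M])
  then show ?thesis by simp
qed

text \<open>The left-hand side is F y - F x for F t = g (b r - r^3) t^(g-1) - (g-1) r t^g, and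
  F' t = g (g-1) t^(g-2) ((b - t) r - r^3) is dominated by the weight via cubic_bound.\<close>
lemma lifting_step_le_integral:
  assumes g: "g > 1" and xy: "0 \<le> x" "x \<le> y" and r: "r \<ge> 0"
    and int: "lifting_weight g b integrable_on {x..y}"
  shows "g * (b * r - r ^ 3) * (y powr (g - 1) - x powr (g - 1)) - (g - 1) * r * (y powr g - x powr g)
    \<le> integral {x..y} (lifting_weight g b)"
proof -
  define F where "F t = g * (b * r - r ^ 3) * t powr (g - 1) - (g - 1) * r * t powr g" for t
  define f where "f t = g * (g - 1) * t powr (g - 2) * ((b - t) * r - r ^ 3)" for t
  have "continuous_on {x..y} F"
    unfolding F_def using g xy
    by (intro continuous_intros continuous_on_powr'[of _ "\<lambda>t. t" "\<lambda>_. _", simplified]) auto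
  moreover have "(F has_vector_derivative f t) (at t)" if "t \<in> {x<..<y}" for t
  proof -
    have t: "t > 0" using that xy by auto
    have "(F has_real_derivative
        (g * (b * r - r ^ 3) * ((g - 1) * t powr (g - 1 - 1)) - (g - 1) * r * (g * t powr (g - 1)))) (at t)"
      unfolding F_def by (intro DERIV_diff DERIV_cmult has_real_derivative_powr t)
    moreover have "t powr (g - 1) = t powr (g - 2) * t"
      using t powr_add[of t "g - 2" 1] by simp
    ultimately show ?thesis
      unfolding f_def by (simp add: has_real_derivative_iff_has_vector_derivative algebra_simps)
  qed
  ultimately have "(f has_integral (F y - F x)) {x..y}"
    by (rule fundamental_theorem_of_calculus_interior[OF xy(2)])
  then have "F y - F x \<le> integral {x..y} (lifting_weight g b)"
  proof (rule has_integral_le[OF _ integrable_integral[OF int]])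
    fix t assume "t \<in> {x..y}"
    then have "0 \<le> g * (g - 1) * t powr (g - 2)" using g xy by simp
    from mult_left_mono[OF cubic_bound[OF r, of "b - t"] this]
    show "f t \<le> lifting_weight g b t"
      unfolding f_def lifting_weight_def by (simp add: mult.assoc)
  qed
  then show ?thesis unfolding F_def by (simp add: algebra_simps)
qed

lemma lifting_bound_gamma_one:
  fixes b :: real and u r :: "nat \<Rightarrow> real"
  assumes b: "b \<ge> 0" and pos: "\<And>k. k < N \<Longrightarrow> u k > 0" and uN: "u N = 0"
    and r: "\<And>k. k < N \<Longrightarrow> r k \<ge> 0"
  shows "(\<Sum>k<N. (b * r k - r k ^ 3) * (u k powr 0 - u (Suc k) powr 0))
    \<le> pi / sqrt 3 * L_cl 1 * b powr (1 + 1/2)"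
proof (cases N)
  case 0
  then show ?thesis using L_cl_nonneg[of 1] by simp
next
  case (Suc M)
  have "(\<Sum>k<N. (b * r k - r k ^ 3) * (u k powr 0 - u (Suc k) powr 0))
      = (\<Sum>k<N. if k = M then b * r M - r M ^ 3 else 0)"
  proof (intro sum.cong refl)
    fix k assume "k \<in> {..<N}"
    then show "(b * r k - r k ^ 3) * (u k powr 0 - u (Suc k) powr 0) = (if k = M then b * r M - r M ^ 3 else 0)"
      using pos[of k] pos[of "Suc k"] uN Suc by auto
  qed
  also have "\<dots> = b * r M - r M ^ 3" using Suc by simp
  also have "\<dots> \<le> cubic_max_const * max b 0 powr (3/2)"
    by (rule cubic_bound) (use r Suc in auto)
  finally show ?thesis using b unfolding L_cl_one by simp
qed

lemma integral_interval_diff: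
  fixes f :: "real \<Rightarrow> 'a::banach"
  assumes "f integrable_on {a..c}" "a \<le> x" "x \<le> y" "y \<le> c"
  shows "integral {x..y} f = integral {a..y} f - integral {a..x} f"
proof -
  have "f integrable_on {a..y}"
    by (rule integrable_subinterval_real[OF assms(1)]) (use assms in auto)
  from Henstock_Kurzweil_Integration.integral_combine[OF assms(2,3) this] show ?thesis
    by (simp add: algebra_simps)
qed

lemma decreasing_levels_bounds:
  fixes u :: "nat \<Rightarrow> real"
  assumes mono: "\<And>k. k < N \<Longrightarrow> u (Suc k) \<le> u k" and uN: "u N = 0" and "k \<le> N"
  shows "0 \<le> u k \<and> u k \<le> u 0"
proof -
  have "u N \<le> u k"
    by (rule dec_induct[where P = "\<lambda>n. u n \<le> u k", OF \<open>k \<le> N\<close>]) (auto intro: order_trans[OF mono])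
  moreover have "u k \<le> u 0"
    by (rule dec_induct[where P = "\<lambda>n. u n \<le> u 0", of 0 k])
      (use \<open>k \<le> N\<close> in \<open>auto intro: order_trans[OF mono]\<close>)
  ultimately show ?thesis using uN by simp
qed

lemma lifting_bound_gamma_gt_one:
  fixes g b :: real and u r :: "nat \<Rightarrow> real"
  assumes g: "g > 1" and b: "b \<ge> 0" and mono: "\<And>k. k < N \<Longrightarrow> u (Suc k) \<le> u k"
    and uN: "u N = 0" and r: "\<And>k. k < N \<Longrightarrow> r k \<ge> 0"
  shows "(\<Sum>k<N. g * (b * r k - r k ^ 3) * (u k powr (g - 1) - u (Suc k) powr (g - 1))
            - (g - 1) * r k * (u k powr g - u (Suc k) powr g)) \<le> pi / sqrt 3 * L_cl g * b powr (g + 1/2)"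
proof -
  define M where "M = max (u 0) b"
  define I where "I x = integral {0..x} (lifting_weight g b)" for x
  note u_bounds = decreasing_levels_bounds[OF mono uN]
  have hM: "(lifting_weight g b has_integral (pi / sqrt 3 * L_cl g * b powr (g + 1/2))) {0..M}"
    unfolding M_def by (rule lifting_weight_has_integral[OF g b]) simp
  then have intM: "lifting_weight g b integrable_on {0..M}" by blast
  have int_diff: "integral {x..y} (lifting_weight g b) = I y - I x" if "0 \<le> x" "x \<le> y" "y \<le> M" for x y
    unfolding I_def by (rule integral_interval_diff[OF intM that])
  have "(\<Sum>k<N. g * (b * r k - r k ^ 3) * (u k powr (g - 1) - u (Suc k) powr (g - 1))
      - (g - 1) * r k * (u k powr g - u (Suc k) powr g)) \<le> (\<Sum>k<N. I (u k) - I (u (Suc k)))"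
  proof (rule sum_mono)
    fix k assume "k \<in> {..<N}"
    then have k: "k < N" by simp
    then have a: "0 \<le> u (Suc k)" "u (Suc k) \<le> u k" "u k \<le> M"
      using u_bounds[of "Suc k"] u_bounds[of k] mono[of k] by (auto simp: M_def)
    have "lifting_weight g b integrable_on {u (Suc k)..u k}"
      by (rule integrable_subinterval_real[OF intM]) (use a in auto)
    from lifting_step_le_integral[OF g a(1,2) r[OF k] this] int_diff[OF a]
    show "g * (b * r k - r k ^ 3) * (u k powr (g - 1) - u (Suc k) powr (g - 1))
        - (g - 1) * r k * (u k powr g - u (Suc k) powr g) \<le> I (u k) - I (u (Suc k))" by simp
  qed
  also have "\<dots> = I (u 0) - I (u N)" by (rule sum_lessThan_telescope')
  also have "\<dots> = I (u 0)" unfolding I_def uN by simp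
  also have "\<dots> \<le> I M"
  proof -
    have "0 \<le> u 0" "u 0 \<le> M" using u_bounds[of 0] by (auto simp: M_def)
    then have "0 \<le> integral {u 0..M} (lifting_weight g b)"
      using g by (intro Henstock_Kurzweil_Integration.integral_nonneg
          integrable_subinterval_real[OF intM] lifting_weight_nonneg) auto
    with int_diff[OF \<open>0 \<le> u 0\<close> \<open>u 0 \<le> M\<close>] show ?thesis by simp
  qed
  also have "I M = pi / sqrt 3 * L_cl g * b powr (g + 1/2)" unfolding I_def using hM by blast
  finally show ?thesis .
qed

lemma lifting_bound:
  fixes g b :: real and u r :: "nat \<Rightarrow> real"
  assumes g: "g \<ge> 1" and b: "b \<ge> 0" and mono: "\<And>k. k < N \<Longrightarrow> u (Suc k) \<le> u k"
    and pos: "\<And>k. k < N \<Longrightarrow> u k > 0" and uN: "u N = 0" and r: "\<And>k. k < N \<Longrightarrow> r k \<ge> 0"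
  shows "(\<Sum>k<N. g * (b * r k - r k ^ 3) * (u k powr (g - 1) - u (Suc k) powr (g - 1))
            - (g - 1) * r k * (u k powr g - u (Suc k) powr g)) \<le> pi / sqrt 3 * L_cl g * b powr (g + 1/2)"
proof (cases "g = 1")
  case True
  then show ?thesis using lifting_bound_gamma_one[where u = u and r = r, OF b pos uN r] by simp
next
  case False
  with g show ?thesis using lifting_bound_gamma_gt_one[where u = u and r = r, OF _ b mono uN r] by simp
qed

subsection \<open>Finitely many eigenvalues\<close>

lemma finite_enumerate_decreasing:
  fixes F :: "'a::linorder set"
  assumes "finite F"
  obtains f where "bij_betw f {..<card F} F" "\<And>i j. i < j \<Longrightarrow> j < card F \<Longrightarrow> f j < f i"
proof
  define L where "L = rev (sorted_list_of_set F)"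
  have L: "distinct L" "length L = card F" "set L = F" "sorted_wrt (>) L"
    using assms by (simp_all add: L_def sorted_wrt_rev)
  show "bij_betw ((!) L) {..<card F} F" by (rule bij_betw_nth) (use L in auto)
  show "L ! j < L ! i" if "i < j" "j < card F" for i j
    using sorted_wrt_nth_less[OF L(4) that(1)] that L(2) by simp
qed

lemma abel_summation:
  fixes x a :: "nat \<Rightarrow> real"
  shows "(\<Sum>k<N. (\<Sum>j\<le>k. x j) * (a k - a (Suc k))) = (\<Sum>k<N. x k * a k) - (\<Sum>k<N. x k) * a N"
  by (induction N) (simp_all add: algebra_simps atMost_Suc lessThan_Suc_atMost[symmetric])

text \<open>Two Abel summations of e^g, written with the partial sums of e and of 1; padding
  the levels with u_N = 0 uses that 0 powr p = 0.\<close>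
lemma sum_powr_abel:
  fixes e :: "nat \<Rightarrow> real"
  assumes pos: "\<And>k. k < N \<Longrightarrow> e k > 0"
  defines "u \<equiv> \<lambda>k. if k < N then e k else 0"
  shows "(\<Sum>k<N. e k powr g) = (\<Sum>k<N. g * (\<Sum>j\<le>k. e j) * (u k powr (g - 1) - u (Suc k) powr (g - 1))
    - (g - 1) * (real k + 1) * (u k powr g - u (Suc k) powr g))"
proof -
  define E where "E k = (\<Sum>j\<le>k. e j)" for k
  have "(\<Sum>k<N. E k * (u k powr (g - 1) - u (Suc k) powr (g - 1))) = (\<Sum>k<N. e k * u k powr (g - 1))"
    using abel_summation[of e "\<lambda>k. u k powr (g - 1)" N] by (simp add: u_def E_def)
  also have "\<dots> = (\<Sum>k<N. e k powr g)"
  proof (intro sum.cong refl)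
    fix k assume "k \<in> {..<N}"
    then show "e k * u k powr (g - 1) = e k powr g"
      using pos[of k] powr_add[of "e k" 1 "g - 1"] by (simp add: u_def)
  qed
  finally have A: "(\<Sum>k<N. E k * (u k powr (g - 1) - u (Suc k) powr (g - 1))) = (\<Sum>k<N. e k powr g)" .
  have "(\<Sum>k<N. (\<Sum>j\<le>k. 1) * (u k powr g - u (Suc k) powr g)) = (\<Sum>k<N. u k powr g)"
    using abel_summation[of "\<lambda>_. 1" "\<lambda>k. u k powr g" N] by (simp add: u_def)
  then have B: "(\<Sum>k<N. (real k + 1) * (u k powr g - u (Suc k) powr g)) = (\<Sum>k<N. e k powr g)"
    by (simp add: u_def add.commute)
  have "(\<Sum>k<N. g * E k * (u k powr (g - 1) - u (Suc k) powr (g - 1))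
      - (g - 1) * (real k + 1) * (u k powr g - u (Suc k) powr g))
    = g * (\<Sum>k<N. E k * (u k powr (g - 1) - u (Suc k) powr (g - 1)))
      - (g - 1) * (\<Sum>k<N. (real k + 1) * (u k powr g - u (Suc k) powr g))"
    by (simp add: sum_subtractf sum_distrib_left mult.assoc)
  also have "\<dots> = (\<Sum>k<N. e k powr g)" unfolding A B by (simp add: algebra_simps)
  finally show ?thesis unfolding E_def[symmetric] by (rule sym)
qed

lemma orthonormal_eigenfunctions_of_finite:
  assumes "finite F" "F \<subseteq> {e. is_eigenvalue b e}"
  obtains ev \<phi> where "bij_betw ev {..<card F} F" "\<And>i j. i < j \<Longrightarrow> j < card F \<Longrightarrow> ev j < ev i"
    "\<And>k. k < card F \<Longrightarrow> is_eigenfunction b (ev k) (\<phi> k)"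
    "\<And>i j. i < card F \<Longrightarrow> j < card F \<Longrightarrow> inner_l2 (\<phi> i) (\<phi> j) = (if i = j then 1 else 0)"
proof -
  obtain ev where bij: "bij_betw ev {..<card F} F" and dec: "\<And>i j. i < j \<Longrightarrow> j < card F \<Longrightarrow> ev j < ev i"
    using finite_enumerate_decreasing[OF assms(1)] by blast
  define \<phi> where "\<phi> k = (SOME \<phi>. is_eigenfunction b (ev k) \<phi> \<and> inner_l2 \<phi> \<phi> = 1)" for k
  have \<phi>: "is_eigenfunction b (ev k) (\<phi> k) \<and> inner_l2 (\<phi> k) (\<phi> k) = 1" if "k < card F" for k
    using bij_betwE[OF bij] assms(2) that unfolding \<phi>_def
    by (intro someI_ex[OF is_eigenvalue_normalized]) auto
  moreover have "inner_l2 (\<phi> i) (\<phi> j) = 0" if "i < card F" "j < card F" "i \<noteq> j" for i j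
  proof (rule eigenfunctions_orthogonal)
    show "is_eigenfunction b (ev i) (\<phi> i)" "is_eigenfunction b (ev j) (\<phi> j)"
      using \<phi> that by blast+
    show "ev i \<noteq> ev j"
      using dec[of i j] dec[of j i] that by (cases i j rule: linorder_cases) auto
  qed
  ultimately show ?thesis by (intro that[OF bij dec]) auto
qed

lemma orthonormal_density_has_sum:
  assumes "finite J" "\<And>j. j \<in> J \<Longrightarrow> ell2 (\<phi> j)" "\<And>j. j \<in> J \<Longrightarrow> inner_l2 (\<phi> j) (\<phi> j) = 1"
  shows "((\<lambda>n. \<Sum>j\<in>J. (\<phi> j n)\<^sup>2) has_sum real (card J)) UNIV"
proof -
  have "((\<lambda>n. \<Sum>j\<in>J. \<phi> j n * \<phi> j n) has_sum (\<Sum>j\<in>J. inner_l2 (\<phi> j) (\<phi> j))) UNIV"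
    using assms by (intro has_sum_sum inner_l2_has_sum) auto
  then show ?thesis using assms by (simp add: power2_eq_square)
qed

lemma eigenvalue_sum_le_density_energy:
  fixes \<phi> :: "'j \<Rightarrow> int \<Rightarrow> real"
  assumes J: "finite J" and eig: "\<And>j. j \<in> J \<Longrightarrow> is_eigenfunction b (e j) (\<phi> j)"
    and on: "\<And>i j. i \<in> J \<Longrightarrow> j \<in> J \<Longrightarrow> inner_l2 (\<phi> i) (\<phi> j) = (if i = j then 1 else 0)"
  defines "\<rho> \<equiv> \<lambda>n. \<Sum>j\<in>J. (\<phi> j n)\<^sup>2"
  shows "(\<lambda>n. b n * \<rho> n - \<rho> n ^ 3) summable_on UNIV
    \<and> (\<Sum>j\<in>J. e j) \<le> (\<Sum>\<^sub>\<infinity>n. b n * \<rho> n - \<rho> n ^ 3)"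
proof -
  define K where "K j = inner_l2 (fwd_diff (\<phi> j)) (fwd_diff (\<phi> j))" for j
  have ell: "ell2 (\<phi> j)" if "j \<in> J" for j using eig[OF that] unfolding is_eigenfunction_def by blast
  have "((\<lambda>n. b n * (\<phi> j n)\<^sup>2) has_sum (e j + K j)) UNIV" if "j \<in> J" for j
    using eigenfunction_potential_has_sum[OF ell[OF that] eig[OF that]] on[OF that that]
    by (simp add: K_def power2_eq_square mult.assoc)
  then have "((\<lambda>n. b n * \<rho> n) has_sum (\<Sum>j\<in>J. e j + K j)) UNIV"
    unfolding \<rho>_def sum_distrib_left using J by (rule has_sum_sum[rotated])
  moreover define S where "S = (\<Sum>\<^sub>\<infinity>n. \<rho> n ^ 3)"
  have S: "((\<lambda>n. \<rho> n ^ 3) has_sum S) UNIV" "S \<le> (\<Sum>j\<in>J. K j)"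
    using orthonormal_density_cube_bound[OF J ell on] has_sum_infsum
    unfolding \<rho>_def K_def S_def by blast+
  ultimately have "((\<lambda>n. b n * \<rho> n - \<rho> n ^ 3) has_sum ((\<Sum>j\<in>J. e j + K j) - S)) UNIV"
    using has_sum_diff S(1) by blast
  moreover have "(\<Sum>j\<in>J. e j) \<le> (\<Sum>j\<in>J. e j + K j) - S"
    using S(2) by (simp add: sum.distrib)
  ultimately show ?thesis by (simp add: has_sum_iff)
qed

lemma finite_eigenvalue_sum_le:
  fixes g :: real and b :: "int \<Rightarrow> real" and F :: "real set"
  assumes g: "g \<ge> 1" and b: "\<And>n. b n \<ge> 0" and bs: "(\<lambda>n. b n powr (g + 1/2)) summable_on UNIV"
    and F: "finite F" "F \<subseteq> {e. e > 0 \<and> is_eigenvalue b e}"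
  shows "(\<Sum>e\<in>F. \<bar>e\<bar> powr g) \<le> pi / sqrt 3 * L_cl g * (\<Sum>\<^sub>\<infinity>n. b n powr (g + 1/2))"
proof -
  define N where "N = card F"
  obtain ev \<phi> where bij: "bij_betw ev {..<N} F" and dec: "\<And>i j. i < j \<Longrightarrow> j < N \<Longrightarrow> ev j < ev i"
    and eig: "\<And>k. k < N \<Longrightarrow> is_eigenfunction b (ev k) (\<phi> k)"
    and on: "\<And>i j. i < N \<Longrightarrow> j < N \<Longrightarrow> inner_l2 (\<phi> i) (\<phi> j) = (if i = j then 1 else 0)"
    using orthonormal_eigenfunctions_of_finite[OF F(1), of b] F(2) unfolding N_def by blast
  have pos: "ev k > 0" if "k < N" for k using bij_betwE[OF bij] F(2) that by auto
  define u where "u k = (if k < N then ev k else 0)" for k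
  define D1 where "D1 k = u k powr (g - 1) - u (Suc k) powr (g - 1)" for k
  define D2 where "D2 k = u k powr g - u (Suc k) powr g" for k
  define \<rho> where "\<rho> k n = (\<Sum>j\<le>k. (\<phi> j n)\<^sup>2)" for k n
  define A where "A k = (\<Sum>\<^sub>\<infinity>n. b n * \<rho> k n - \<rho> k n ^ 3)" for k
  define W where "W n = (\<Sum>k<N. g * (b n * \<rho> k n - \<rho> k n ^ 3) * D1 k - (g - 1) * \<rho> k n * D2 k)" for n
  have umono: "u (Suc k) \<le> u k" if "k < N" for k
    using dec[of k "Suc k"] pos[OF that] that unfolding u_def by auto
  have energy: "(\<lambda>n. b n * \<rho> k n - \<rho> k n ^ 3) summable_on UNIV \<and> (\<Sum>j\<le>k. ev j) \<le> A k" if "k < N" for k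
    unfolding \<rho>_def A_def using that
    by (intro eigenvalue_sum_le_density_energy) (auto intro: eig simp: on)
  have density: "(\<rho> k has_sum (real k + 1)) UNIV" if "k < N" for k
    using orthonormal_density_has_sum[of "{..k}" \<phi>] that eig on
    unfolding \<rho>_def is_eigenfunction_def by (auto simp: add.commute)
  have "(W has_sum (\<Sum>k<N. g * A k * D1 k - (g - 1) * (real k + 1) * D2 k)) UNIV"
    unfolding W_def
  proof (intro has_sum_sum)
    fix k assume "k \<in> {..<N}"
    then have k: "k < N" by simp
    have "((\<lambda>n. b n * \<rho> k n - \<rho> k n ^ 3) has_sum A k) UNIV"
      unfolding A_def using energy[OF k] has_sum_infsum by blast
    then show "((\<lambda>n. g * (b n * \<rho> k n - \<rho> k n ^ 3) * D1 k - (g - 1) * \<rho> k n * D2 k)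
        has_sum (g * A k * D1 k - (g - 1) * (real k + 1) * D2 k)) UNIV"
      by (intro has_sum_diff has_sum_cmult_left has_sum_cmult_right density[OF k])
  qed simp
  moreover have "((\<lambda>n. pi / sqrt 3 * L_cl g * b n powr (g + 1/2))
      has_sum (pi / sqrt 3 * L_cl g * (\<Sum>\<^sub>\<infinity>n. b n powr (g + 1/2)))) UNIV"
    using bs by (intro has_sum_cmult_right has_sum_infsum)
  moreover have "W n \<le> pi / sqrt 3 * L_cl g * b n powr (g + 1/2)" for n
    unfolding W_def D1_def D2_def
    by (rule lifting_bound[where u = u and r = "\<lambda>k. \<rho> k n", OF g b umono])
      (auto simp: u_def \<rho>_def pos sum_nonneg)
  ultimately have W_le: "(\<Sum>k<N. g * A k * D1 k - (g - 1) * (real k + 1) * D2 k)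
      \<le> pi / sqrt 3 * L_cl g * (\<Sum>\<^sub>\<infinity>n. b n powr (g + 1/2))"
    by (rule has_sum_mono)
  have "(\<Sum>e\<in>F. \<bar>e\<bar> powr g) = (\<Sum>k<N. ev k powr g)"
    using sum.reindex_bij_betw[OF bij, of "\<lambda>e. \<bar>e\<bar> powr g"] pos by (simp add: less_imp_le)
  also have "\<dots> = (\<Sum>k<N. g * (\<Sum>j\<le>k. ev j) * D1 k - (g - 1) * (real k + 1) * D2 k)"
    unfolding D1_def D2_def u_def using sum_powr_abel[of N ev g] pos by simp
  also have "\<dots> \<le> (\<Sum>k<N. g * A k * D1 k - (g - 1) * (real k + 1) * D2 k)"
  proof (rule sum_mono)
    fix k assume "k \<in> {..<N}"
    then have k: "k < N" by simp
    have "0 \<le> u (Suc k)" using pos[of "Suc k"] by (simp add: u_def less_imp_le)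
    then have "0 \<le> D1 k"
      unfolding D1_def using powr_mono2[OF _ _ umono[OF k], of "g - 1"] g by simp
    moreover have "(\<Sum>j\<le>k. ev j) \<le> A k" using energy[OF k] by simp
    ultimately show "g * (\<Sum>j\<le>k. ev j) * D1 k - (g - 1) * (real k + 1) * D2 k
        \<le> g * A k * D1 k - (g - 1) * (real k + 1) * D2 k"
      using g by (simp add: mult_right_mono)
  qed
  also note W_le
  finally show ?thesis .
qed

theorem corollary1p4:
  fixes \<gamma> :: real and b :: "int \<Rightarrow> real"
  assumes "\<gamma> \<ge> 1"
    and "\<And>n. b n \<ge> 0"
    and "(\<lambda>n. \<bar>b n\<bar> powr (\<gamma> + 1/2)) summable_on UNIV"
  shows "(\<lambda>e. \<bar>e\<bar> powr \<gamma>) summable_on {e. e > 0 \<and> is_eigenvalue b e}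
    \<and> (\<Sum>\<^sub>\<infinity>e\<in>{e. e > 0 \<and> is_eigenvalue b e}. \<bar>e\<bar> powr \<gamma>)
        \<le> pi / sqrt 3 * L_cl \<gamma> * (\<Sum>\<^sub>\<infinity>n\<in>UNIV. b n powr (\<gamma> + 1/2))"
proof -
  let ?S = "{e. e > 0 \<and> is_eigenvalue b e}"
  let ?R = "pi / sqrt 3 * L_cl \<gamma> * (\<Sum>\<^sub>\<infinity>n\<in>UNIV. b n powr (\<gamma> + 1/2))"
  have "(\<lambda>n. b n powr (\<gamma> + 1/2)) summable_on UNIV"
    using assms(2,3) by (simp add: abs_of_nonneg)
  then have finite_le: "(\<Sum>e\<in>F. \<bar>e\<bar> powr \<gamma>) \<le> ?R" if "finite F" "F \<subseteq> ?S" for F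
    using finite_eigenvalue_sum_le[of \<gamma> b, OF assms(1,2)] that by blast
  then have "(\<lambda>e. \<bar>e\<bar> powr \<gamma>) summable_on ?S"
    by (intro nonneg_bdd_above_summable_on bdd_aboveI[where M = ?R]) auto
  moreover from this have "(\<Sum>\<^sub>\<infinity>e\<in>?S. \<bar>e\<bar> powr \<gamma>) \<le> ?R"
    using finite_le by (rule infsum_le_finite_sums)
  ultimately show ?thesis by blast
qed

end
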